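(* Let $\varphi$ be an increasing concave function on $(0,\infty)$ with $\varphi(0^+)=0$. Then the Lorentz space $\Lambda_\varphi$ on $(0,\infty)$ contains a lattice isometric copy of $\ell_\infty$ if and only if $\varphi(\infty)=\lim_{t\to\infty}\varphi(t)<\infty$.
   Context: The Lorentz space $\Lambda_\varphi$ consists of measurable $f$ on $(0,\infty)$ with $\|f\|_{\Lambda_\varphi}=\int_0^\infty f^*(t)\,d\varphi(t)=\varphi(0^+)\|f\|_\infty+\int_0^\infty f^*(t)\varphi'(t)\,dt<\infty$, where $f^*$ is the non-increasing rearrangement of $|f|$. A lattice isometric copy of $\ell_\infty$ is the image of a linear isometric embedding $T:\ell_\infty\to\Lambda_\varphi$ that is a lattice homomorphism. *)

theory Defs
  imports "HOL-Analysis.Analysis"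
begin

definition halfline :: "real measure" where
  "halfline = restrict_space lebesgue {0<..}"

definition distfun :: "(real \<Rightarrow> real) \<Rightarrow> ennreal \<Rightarrow> ennreal" where
  "distfun f s = emeasure halfline {x \<in> space halfline. ennreal \<bar>f x\<bar> > s}"

definition rearr :: "(real \<Rightarrow> real) \<Rightarrow> real \<Rightarrow> ennreal" where
  "rearr f t = Inf {s. distfun f s \<le> ennreal t}"

text \<open>Extension of phi by 0 on (-infinity,0]; with phi(0+)=0 this is continuous and non-decreasing,
  and its Lebesgue--Stieltjes measure is d phi.\<close>
definition phi_ext :: "(real \<Rightarrow> real) \<Rightarrow> real \<Rightarrow> real" where
  "phi_ext \<phi> t = (if t \<le> 0 then 0 else \<phi> t)"

definition lorentz_norm :: "(real \<Rightarrow> real) \<Rightarrow> (real \<Rightarrow> real) \<Rightarrow> ennreal" where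
  "lorentz_norm \<phi> f = (\<integral>\<^sup>+ t. rearr f t * indicator {0<..} t \<partial>interval_measure (phi_ext \<phi>))"

definition in_lorentz :: "(real \<Rightarrow> real) \<Rightarrow> (real \<Rightarrow> real) \<Rightarrow> bool" where
  "in_lorentz \<phi> f \<longleftrightarrow> f \<in> borel_measurable halfline \<and> lorentz_norm \<phi> f < \<infinity>"

definition linf :: "(nat \<Rightarrow> real) set" where
  "linf = {x. bounded (range x)}"

definition linf_norm :: "(nat \<Rightarrow> real) \<Rightarrow> real" where
  "linf_norm x = (SUP n. \<bar>x n\<bar>)"

text \<open>A linear isometric lattice-homomorphic embedding of ell_infinity into Lambda_phi
  (elements of Lambda_phi are identified when equal a.e. on (0,infinity)).\<close>
definition lattice_isometric_embedding ::
  "(real \<Rightarrow> real) \<Rightarrow> ((nat \<Rightarrow> real) \<Rightarrow> (real \<Rightarrow> real)) \<Rightarrow> bool" where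
  "lattice_isometric_embedding \<phi> T \<longleftrightarrow>
     (\<forall>x\<in>linf. in_lorentz \<phi> (T x)) \<and>
     (\<forall>x\<in>linf. \<forall>y\<in>linf. \<forall>a b. AE t in halfline.
         T (\<lambda>n. a * x n + b * y n) t = a * T x t + b * T y t) \<and>
     (\<forall>x\<in>linf. \<forall>y\<in>linf. AE t in halfline.
         T (\<lambda>n. max (x n) (y n)) t = max (T x t) (T y t)) \<and>
     (\<forall>x\<in>linf. lorentz_norm \<phi> (T x) = ennreal (linf_norm x))"

definition contains_lattice_isometric_linf :: "(real \<Rightarrow> real) \<Rightarrow> bool" where
  "contains_lattice_isometric_linf \<phi> \<longleftrightarrow> (\<exists>T. lattice_isometric_embedding \<phi> T)"

end

theory Submission
  imports Defs
begin

text \<open>If \<open>\<phi>(\<infinity>) = L < \<infinity>\<close>, then \<open>d\<phi>\<close> is a finite measure of mass \<open>L\<close>. Split \<open>(0,\<infinity>)\<close>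
  into countably many sets \<open>A\<^sub>n\<close> of infinite Lebesgue measure. The decreasing rearrangement
  of \<open>\<Sum>\<^sub>n x\<^sub>n 1\<^bsub>A\<^sub>n\<^esub> / L\<close> is the constant \<open>sup\<^sub>n \<bar>x\<^sub>n\<bar> / L\<close>, so
  \<open>x \<mapsto> \<Sum>\<^sub>n x\<^sub>n 1\<^bsub>A\<^sub>n\<^esub> / L\<close> is a lattice isometry.

  Conversely, let \<open>\<phi>(\<infinity>) = \<infinity>\<close> and let \<open>T\<close> be a lattice isometry. The images \<open>g\<^sub>n\<close>
  of the unit vectors are disjointly supported, dominated by \<open>f = T 1\<close>, and have norm 1.
  Since \<open>d\<phi>\<close> has infinite mass, \<open>\<parallel>f\<parallel> < \<infinity>\<close> forces the distribution function
  \<open>d\<^sub>f(s)\<close> to be finite for every \<open>s > 0\<close>; by disjointness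
  \<open>\<Sum>\<^sub>n d\<^bsub>g\<^sub>n\<^esub>(s) \<le> d\<^sub>f(s)\<close>, hence \<open>d\<^bsub>g\<^sub>n\<^esub>(s) \<rightarrow> 0\<close> and \<open>g\<^sub>n\<^sup>* \<rightarrow> 0\<close> pointwise.
  Dominated convergence with \<open>g\<^sub>n\<^sup>* \<le> f\<^sup>*\<close> gives \<open>\<parallel>g\<^sub>n\<parallel> \<rightarrow> 0\<close>, a contradiction.\<close>

lemma ennreal_suminf_lt_top_LIMSEQ_zero:
  fixes a :: "nat \<Rightarrow> ennreal"
  assumes "(\<Sum>i. a i) < \<infinity>"
  shows "a \<longlonglongrightarrow> 0"
proof -
  have "a i < \<infinity>" for i
    using assms by (rule ennreal_suminf_lessD)
  then obtain b where a: "a = (\<lambda>i. ennreal (b i))" and b: "\<And>i. 0 \<le> b i"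
    by (intro that[of "\<lambda>i. enn2real (a i)"]) (auto simp: fun_eq_iff less_top)
  have "summable b"
    using assms b unfolding a by (intro summable_suminf_not_top) auto
  then have "b \<longlonglongrightarrow> 0"
    by (rule summable_LIMSEQ_zero)
  then show ?thesis
    unfolding a by (simp add: tendsto_ennrealI[where x=0, simplified])
qed

section \<open>Distribution function and decreasing rearrangement\<close>

lemma space_halfline: "space halfline = {0<..}"
  by (simp add: halfline_def)

lemma sets_halfline: "A \<in> sets halfline \<longleftrightarrow> A \<in> sets lebesgue \<and> A \<subseteq> {0<..}"
  unfolding halfline_def by (subst sets_restrict_space_iff) auto

lemma emeasure_halfline:
  "A \<in> sets lebesgue \<Longrightarrow> A \<subseteq> {0<..} \<Longrightarrow> emeasure halfline A = emeasure lebesgue A"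
  unfolding halfline_def by (rule emeasure_restrict_space) auto

lemma measurable_halfline: "f \<in> borel \<rightarrow>\<^sub>M N \<Longrightarrow> f \<in> halfline \<rightarrow>\<^sub>M N"
  unfolding halfline_def
  by (rule measurable_restrict_space1, rule measurable_completion) simp

lemma distfun_sets [measurable]:
  "f \<in> borel_measurable halfline \<Longrightarrow> {x \<in> space halfline. s < ennreal \<bar>f x\<bar>} \<in> sets halfline"
  by measurable

lemma distfun_antimono:
  assumes "f \<in> borel_measurable halfline" and "s \<le> s'"
  shows "distfun f s' \<le> distfun f s"
  unfolding distfun_def
  by (rule emeasure_mono) (use assms distfun_sets[OF assms(1)] in \<open>auto intro: le_less_trans\<close>)

lemma distfun_mono_AE:
  assumes [measurable]: "f \<in> borel_measurable halfline"
    and dom: "AE x in halfline. \<bar>g x\<bar> \<le> \<bar>f x\<bar>"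
  shows "distfun g s \<le> distfun f s"
  unfolding distfun_def
proof (rule emeasure_mono_AE)
  show "AE x \<in> {x \<in> space halfline. s < ennreal \<bar>g x\<bar>} in halfline.
          x \<in> {x \<in> space halfline. s < ennreal \<bar>f x\<bar>}"
    using dom by eventually_elim (auto intro: less_le_trans ennreal_leI)
qed measurable

lemma rearr_le: "distfun f s \<le> ennreal t \<Longrightarrow> rearr f t \<le> s"
  unfolding rearr_def by (rule Inf_lower) simp

lemma rearr_antimono: "t \<le> t' \<Longrightarrow> rearr f t' \<le> rearr f t"
  unfolding rearr_def by (rule Inf_superset_mono) (auto intro: order.trans ennreal_leI)

lemma borel_measurable_rearr [measurable]: "rearr f \<in> borel_measurable borel"
proof (rule borel_measurableI_greater)
  fix y
  have "is_interval {t. y < rearr f t}"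
    unfolding is_interval_1 using rearr_antimono by (blast intro: less_le_trans)
  then show "{t \<in> space borel. y < rearr f t} \<in> sets borel"
    by (simp add: real_interval_borel_measurable)
qed

lemma rearr_mono_AE:
  assumes "f \<in> borel_measurable halfline" and "AE x in halfline. \<bar>g x\<bar> \<le> \<bar>f x\<bar>"
  shows "rearr g t \<le> rearr f t"
  unfolding rearr_def
  by (rule Inf_superset_mono) (auto intro: order.trans[OF distfun_mono_AE[OF assms]])

lemma rearr_ge_if_distfun_top:
  assumes "f \<in> borel_measurable halfline" and "distfun f s = \<infinity>"
  shows "s \<le> rearr f t"
  unfolding rearr_def
proof (rule Inf_greatest)
  fix s' assume "s' \<in> {s. distfun f s \<le> ennreal t}"
  then have "distfun f s' \<le> ennreal t" by simp
  then have "distfun f s' < distfun f s"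
    using assms(2) by (simp add: le_less_trans)
  then show "s \<le> s'"
    using distfun_antimono[OF assms(1), of s' s] by (meson leD nle_le)
qed

lemma rearr_eq_const:
  assumes bound: "\<And>x. 0 < x \<Longrightarrow> \<bar>f x\<bar> \<le> M"
    and large: "\<And>r. 0 \<le> r \<Longrightarrow> r < M \<Longrightarrow> distfun f (ennreal r) = \<infinity>"
  shows "rearr f t = ennreal M"
proof -
  have "{s. distfun f s \<le> ennreal t} = {ennreal M..}"
  proof (intro set_eqI iffI)
    fix s assume "s \<in> {ennreal M..}"
    then have "ennreal \<bar>f x\<bar> \<le> s" if "0 < x" for x
      using bound[OF that] by (auto intro: order.trans[OF ennreal_leI])
    then have empty: "{x \<in> space halfline. s < ennreal \<bar>f x\<bar>} = {}"
      by (auto simp: space_halfline dest: leD)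
    show "s \<in> {s. distfun f s \<le> ennreal t}"
      unfolding distfun_def mem_Collect_eq empty by simp
  next
    fix s assume s: "s \<in> {s. distfun f s \<le> ennreal t}"
    show "s \<in> {ennreal M..}"
    proof (rule ccontr)
      assume "s \<notin> {ennreal M..}"
      then obtain r where "s = ennreal r" "0 \<le> r" "r < M"
        by (cases s rule: ennreal_cases) (auto simp: ennreal_less_iff)
      with s large show False by (simp add: top_unique)
    qed
  qed
  then show ?thesis
    unfolding rearr_def by simp
qed

lemma rearr_tendsto_zero:
  assumes dist: "\<And>s. 0 < s \<Longrightarrow> (\<lambda>n. distfun (g n) (ennreal s)) \<longlonglongrightarrow> 0"
    and "0 < t"
  shows "(\<lambda>n. rearr (g n) t) \<longlonglongrightarrow> 0"
proof (rule order_tendstoI)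
  fix y :: ennreal assume "0 < y"
  then obtain z where z: "0 < z" "z < y"
    using dense by blast
  then obtain e where e: "0 < e" "ennreal e < y"
    by (cases z rule: ennreal_cases) auto
  have "eventually (\<lambda>n. distfun (g n) (ennreal e) < ennreal t) sequentially"
    using order_tendstoD(2)[OF dist[OF \<open>0 < e\<close>]] \<open>0 < t\<close> by simp
  then show "eventually (\<lambda>n. rearr (g n) t < y) sequentially"
  proof eventually_elim
    case (elim n)
    then have "rearr (g n) t \<le> ennreal e"
      by (intro rearr_le less_imp_le)
    then show ?case
      using e(2) by (rule le_less_trans)
  qed
qed simp

lemma suminf_distfun_le:
  assumes [measurable]: "f \<in> borel_measurable halfline" "\<And>n. g n \<in> borel_measurable halfline"
    and dom: "AE x in halfline. \<forall>n. \<bar>g n x\<bar> \<le> \<bar>f x\<bar>"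
    and disj: "AE x in halfline. \<forall>n m. n \<noteq> m \<longrightarrow> g n x = 0 \<or> g m x = 0"
  shows "(\<Sum>n. distfun (g n) s) \<le> distfun f s"
proof -
  obtain N where N: "\<And>x. x \<in> space halfline - N \<Longrightarrow>
      (\<forall>n. \<bar>g n x\<bar> \<le> \<bar>f x\<bar>) \<and> (\<forall>n m. n \<noteq> m \<longrightarrow> g n x = 0 \<or> g m x = 0)"
    and null: "N \<in> null_sets halfline"
    using AE_conjI[OF dom disj] by (rule AE_E3) blast
  define E where "E n = {x \<in> space halfline. s < ennreal \<bar>g n x\<bar>} - N" for n
  have E_sets: "E n \<in> sets halfline" for n
    unfolding E_def using null by (intro sets.Diff distfun_sets) auto
  have "distfun (g n) s = emeasure halfline (E n)" for n
    unfolding E_def distfun_def by (rule emeasure_Diff_null_set[OF null, symmetric]) measurable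
  moreover have "disjoint_family E"
    unfolding disjoint_family_on_def E_def using N by fastforce
  then have "(\<Sum>n. emeasure halfline (E n)) = emeasure halfline (\<Union>n. E n)"
    using E_sets by (intro suminf_emeasure) auto
  moreover have "(\<Union>n. E n) \<subseteq> {x \<in> space halfline. s < ennreal \<bar>f x\<bar>}"
    unfolding E_def using N by (fastforce intro: less_le_trans ennreal_leI)
  then have "emeasure halfline (\<Union>n. E n) \<le> distfun f s"
    unfolding distfun_def by (rule emeasure_mono) measurable
  ultimately show ?thesis by simp
qed

text \<open>The fibers of \<open>block_index\<close> are the sets \<open>A\<^sub>n\<close> above: each is a union of
  infinitely many unit intervals \<open>(k, k + 1)\<close>.\<close>

definition block_index :: "real \<Rightarrow> nat" where
  "block_index t = fst (prod_decode (nat \<lfloor>t\<rfloor>))"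

lemma measurable_block_index [measurable]: "block_index \<in> halfline \<rightarrow>\<^sub>M count_space UNIV"
proof (rule measurable_halfline)
  have "(\<lambda>k::int. fst (prod_decode (nat k))) \<in> count_space UNIV \<rightarrow>\<^sub>M count_space UNIV"
    by simp
  from measurable_compose[OF measurable_real_floor this]
  show "block_index \<in> borel \<rightarrow>\<^sub>M count_space UNIV"
    by (simp add: block_index_def[abs_def] o_def)
qed

lemma emeasure_block_index_fiber:
  "emeasure halfline {t \<in> space halfline. block_index t = n} = \<infinity>"
proof -
  define B where "B j = {real (prod_encode (n, j))<..<real (prod_encode (n, j)) + 1}" for j
  have floor_B: "\<lfloor>t\<rfloor> = int (prod_encode (n, j))" if "t \<in> B j" for t j
    using that by (intro floor_unique) (auto simp: B_def)
  have B_sub: "B j \<subseteq> {t \<in> space halfline. block_index t = n}" for j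
  proof
    fix t assume t: "t \<in> B j"
    then have "0 < t"
      by (auto simp: B_def intro: le_less_trans[OF of_nat_0_le_iff])
    with floor_B[OF t] show "t \<in> {t \<in> space halfline. block_index t = n}"
      by (simp add: block_index_def space_halfline)
  qed
  have B_sets: "B j \<in> sets halfline" for j
    using B_sub[of j] by (auto simp: sets_halfline space_halfline B_def)
  have "disjoint_family B"
    unfolding disjoint_family_on_def
    by (auto dest!: floor_B simp: prod_encode_eq)
  then have "(\<Sum>j. emeasure halfline (B j)) = emeasure halfline (\<Union>j. B j)"
    using B_sets by (intro suminf_emeasure) auto
  moreover have "emeasure halfline (B j) = 1" for j
    using B_sub[of j] by (subst emeasure_halfline) (auto simp: B_def space_halfline)
  moreover have "(\<Sum>j. 1 :: ennreal) = \<infinity>"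
    by (simp add: suminf_eq_SUP ennreal_SUP_of_nat_eq_top)
  moreover have "emeasure halfline (\<Union>j. B j) \<le> emeasure halfline {t \<in> space halfline. block_index t = n}"
    using B_sub by (intro emeasure_mono) auto
  ultimately show ?thesis
    by (simp add: top_unique)
qed

lemma rearr_block_index:
  assumes bound: "\<And>n. \<bar>c n\<bar> \<le> M" and approx: "\<And>r. r < M \<Longrightarrow> \<exists>n. r < \<bar>c n\<bar>"
  shows "rearr (\<lambda>t. c (block_index t)) t = ennreal M"
proof (rule rearr_eq_const)
  fix r :: real assume "0 \<le> r" "r < M"
  then obtain n where "r < \<bar>c n\<bar>"
    using approx by blast
  then have "{t \<in> space halfline. block_index t = n}
      \<subseteq> {x \<in> space halfline. ennreal r < ennreal \<bar>c (block_index x)\<bar>}"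
    using \<open>0 \<le> r\<close> by (auto simp: ennreal_less_iff)
  then have "\<infinity> \<le> distfun (\<lambda>t. c (block_index t)) (ennreal r)"
    unfolding distfun_def emeasure_block_index_fiber[symmetric, of n]
    by (intro emeasure_mono) measurable
  then show "distfun (\<lambda>t. c (block_index t)) (ennreal r) = \<infinity>"
    by (simp add: top_unique)
qed (rule bound)

section \<open>The Lorentz norm\<close>

abbreviation phi_measure :: "(real \<Rightarrow> real) \<Rightarrow> real measure" where
  "phi_measure \<phi> \<equiv> interval_measure (phi_ext \<phi>)"

lemma lorentz_norm_const_rearr:
  assumes "\<And>t. 0 < t \<Longrightarrow> rearr f t = c"
  shows "lorentz_norm \<phi> f = c * emeasure (phi_measure \<phi>) {0<..}"
proof -
  have "lorentz_norm \<phi> f = (\<integral>\<^sup>+ t. c * indicator {0<..} t \<partial>phi_measure \<phi>)"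
    unfolding lorentz_norm_def using assms by (intro nn_integral_cong) (simp split: split_indicator)
  then show ?thesis by (simp add: nn_integral_cmult_indicator)
qed

lemma lorentz_norm_ge_const_rearr:
  assumes "\<And>t. 0 < t \<Longrightarrow> c \<le> rearr f t"
  shows "c * emeasure (phi_measure \<phi>) {0<..} \<le> lorentz_norm \<phi> f"
proof -
  have "(\<integral>\<^sup>+ t. c * indicator {0<..} t \<partial>phi_measure \<phi>) \<le> lorentz_norm \<phi> f"
    unfolding lorentz_norm_def using assms by (intro nn_integral_mono) (simp split: split_indicator)
  then show ?thesis by (simp add: nn_integral_cmult_indicator)
qed

lemma distfun_lt_top_if_lorentz_norm_lt_top:
  assumes "f \<in> borel_measurable halfline" and "lorentz_norm \<phi> f < \<infinity>"
    and "emeasure (phi_measure \<phi>) {0<..} = \<infinity>" and "0 < s"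
  shows "distfun f (ennreal s) < \<infinity>"
proof -
  have "distfun f (ennreal s) \<noteq> \<infinity>"
  proof
    assume "distfun f (ennreal s) = \<infinity>"
    then have "ennreal s * emeasure (phi_measure \<phi>) {0<..} \<le> lorentz_norm \<phi> f"
      using assms(1) by (intro lorentz_norm_ge_const_rearr rearr_ge_if_distfun_top)
    then show False
      using assms(2-4) by (simp add: ennreal_mult_top top_unique)
  qed
  then show ?thesis
    by (simp add: less_top)
qed

lemma lorentz_norm_tendsto_zero:
  assumes dom: "\<And>n t. rearr (g n) t \<le> rearr f t" and f: "lorentz_norm \<phi> f < \<infinity>"
    and lim: "\<And>t. 0 < t \<Longrightarrow> (\<lambda>n. rearr (g n) t) \<longlonglongrightarrow> 0"
  shows "(\<lambda>n. lorentz_norm \<phi> (g n)) \<longlonglongrightarrow> 0"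
proof -
  have "(\<lambda>n. \<integral>\<^sup>+ t. rearr (g n) t * indicator {0<..} t \<partial>phi_measure \<phi>)
      \<longlonglongrightarrow> (\<integral>\<^sup>+ t. 0 \<partial>phi_measure \<phi>)"
  proof (rule nn_integral_dominated_convergence)
    show "AE t in phi_measure \<phi>. (\<lambda>n. rearr (g n) t * indicator {0<..} t) \<longlonglongrightarrow> 0"
      using lim by (intro AE_I2) (simp split: split_indicator)
  qed (use dom f in \<open>auto simp: lorentz_norm_def intro!: mult_right_mono\<close>)
  then show ?thesis
    unfolding lorentz_norm_def by simp
qed

lemma lorentz_norm_disjoint_tendsto_zero:
  assumes mass: "emeasure (phi_measure \<phi>) {0<..} = \<infinity>"
    and f: "f \<in> borel_measurable halfline" "lorentz_norm \<phi> f < \<infinity>"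
    and g: "\<And>n. g n \<in> borel_measurable halfline"
    and dom: "AE t in halfline. \<forall>n. \<bar>g n t\<bar> \<le> \<bar>f t\<bar>"
    and disj: "AE t in halfline. \<forall>n m. n \<noteq> m \<longrightarrow> g n t = 0 \<or> g m t = 0"
  shows "(\<lambda>n. lorentz_norm \<phi> (g n)) \<longlonglongrightarrow> 0"
proof (rule lorentz_norm_tendsto_zero)
  show "rearr (g n) t \<le> rearr f t" for n t
    by (rule rearr_mono_AE[OF f(1)]) (use dom in \<open>auto elim: eventually_mono\<close>)
  have "(\<lambda>n. distfun (g n) (ennreal s)) \<longlonglongrightarrow> 0" if "0 < s" for s
  proof (rule ennreal_suminf_lt_top_LIMSEQ_zero)
    have "(\<Sum>n. distfun (g n) (ennreal s)) \<le> distfun f (ennreal s)"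
      by (rule suminf_distfun_le[OF f(1) g dom disj])
    also have "\<dots> < \<infinity>"
      by (rule distfun_lt_top_if_lorentz_norm_lt_top[OF f mass that])
    finally show "(\<Sum>n. distfun (g n) (ennreal s)) < \<infinity>" .
  qed
  then show "(\<lambda>n. rearr (g n) t) \<longlonglongrightarrow> 0" if "0 < t" for t
    using that by (rule rearr_tendsto_zero)
qed (rule f(2))

section \<open>Lattice isometric embeddings of \<open>\<ell>\<^sub>\<infinity>\<close>\<close>

lemma linfI: "(\<And>k. \<bar>x k\<bar> \<le> B) \<Longrightarrow> x \<in> linf"
  unfolding linf_def bounded_iff by (auto simp: real_norm_def)

lemma linf_const: "(\<lambda>k. c) \<in> linf"
  by (rule linfI[of _ "\<bar>c\<bar>"]) simp

lemma linf_indicator: "indicator {n} \<in> linf"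
  by (rule linfI[of _ 1]) (simp add: indicator_def)

lemma linf_norm_indicator: "linf_norm (indicator {n}) = 1"
  unfolding linf_norm_def by (rule cSup_eq_maximum) (auto intro!: image_eqI[of _ _ n])

lemma bdd_above_linf: "x \<in> linf \<Longrightarrow> bdd_above (range (\<lambda>n. \<bar>x n\<bar>))"
  unfolding linf_def bounded_iff real_norm_def by (auto intro: bdd_aboveI2)

lemma linf_norm_nonneg: "x \<in> linf \<Longrightarrow> 0 \<le> linf_norm x"
  unfolding linf_norm_def by (rule cSUP_upper2[OF bdd_above_linf UNIV_I abs_ge_zero])

lemma lattice_isometric_embeddingD:
  assumes "lattice_isometric_embedding \<phi> T"
  shows "x \<in> linf \<Longrightarrow> in_lorentz \<phi> (T x)"
    and "x \<in> linf \<Longrightarrow> y \<in> linf \<Longrightarrow>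
      AE t in halfline. T (\<lambda>n. a * x n + b * y n) t = a * T x t + b * T y t"
    and "x \<in> linf \<Longrightarrow> y \<in> linf \<Longrightarrow>
      AE t in halfline. T (\<lambda>n. max (x n) (y n)) t = max (T x t) (T y t)"
    and "x \<in> linf \<Longrightarrow> lorentz_norm \<phi> (T x) = ennreal (linf_norm x)"
  using assms unfolding lattice_isometric_embedding_def by blast+

lemma lattice_isometric_embedding_nonneg:
  assumes T: "lattice_isometric_embedding \<phi> T" and x: "x \<in> linf" "\<And>k. 0 \<le> x k"
  shows "AE t in halfline. 0 \<le> T x t"
proof -
  have "(\<lambda>k. max (x k) 0) = x"
    using x(2) by (simp add: fun_eq_iff max_absorb1)
  then have "AE t in halfline. T x t = max (T x t) (T (\<lambda>k. 0) t)"
    using lattice_isometric_embeddingD(3)[OF T x(1) linf_const[of 0]] by simp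
  moreover have "AE t in halfline. T (\<lambda>k. 0) t = 0"
    using lattice_isometric_embeddingD(2)[OF T x(1) x(1), of 0 0] by simp
  ultimately show ?thesis
    by eventually_elim simp
qed

lemma lattice_isometric_embedding_mono:
  assumes T: "lattice_isometric_embedding \<phi> T" and xy: "x \<in> linf" "y \<in> linf" "\<And>k. x k \<le> y k"
  shows "AE t in halfline. T x t \<le> T y t"
proof -
  have "(\<lambda>k. 1 * y k + (-1) * x k) \<in> linf"
    using xy(1,2) unfolding linf_def by (simp add: bounded_minus_comp)
  then have "AE t in halfline. 0 \<le> T (\<lambda>k. 1 * y k + (-1) * x k) t"
    using xy(3) by (intro lattice_isometric_embedding_nonneg[OF T]) auto
  moreover have "AE t in halfline. T (\<lambda>k. 1 * y k + (-1) * x k) t = 1 * T y t + (-1) * T x t"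
    using lattice_isometric_embeddingD(2)[OF T xy(2,1)] .
  ultimately show ?thesis
    by eventually_elim simp
qed

lemma lattice_isometric_embedding_disjoint:
  assumes T: "lattice_isometric_embedding \<phi> T" and xy: "x \<in> linf" "y \<in> linf"
    and nonneg: "\<And>k. 0 \<le> x k" "\<And>k. 0 \<le> y k" and disj: "\<And>k. x k = 0 \<or> y k = 0"
  shows "AE t in halfline. T x t = 0 \<or> T y t = 0"
proof -
  have "max (x k) (y k) = 1 * x k + 1 * y k" for k
    using nonneg[of k] disj[of k] by auto
  then have "(\<lambda>k. max (x k) (y k)) = (\<lambda>k. 1 * x k + 1 * y k)"
    by simp
  then have "AE t in halfline. T (\<lambda>k. 1 * x k + 1 * y k) t = max (T x t) (T y t)"
    using lattice_isometric_embeddingD(3)[OF T xy] by simp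
  moreover have "AE t in halfline. T (\<lambda>k. 1 * x k + 1 * y k) t = 1 * T x t + 1 * T y t"
    by (rule lattice_isometric_embeddingD(2)[OF T xy])
  moreover have "AE t in halfline. 0 \<le> T x t" "AE t in halfline. 0 \<le> T y t"
    using lattice_isometric_embedding_nonneg[OF T] xy nonneg by blast+
  ultimately show ?thesis
    by eventually_elim (auto simp: max_def split: if_splits)
qed

lemma lattice_isometric_embedding_unit_vectors:
  assumes T: "lattice_isometric_embedding \<phi> T"
  shows "AE t in halfline. \<forall>n. \<bar>T (indicator {n}) t\<bar> \<le> \<bar>T (\<lambda>k. 1) t\<bar>"
    and "AE t in halfline. \<forall>n m. n \<noteq> m \<longrightarrow> T (indicator {n}) t = 0 \<or> T (indicator {m}) t = 0"
proof -
  have "AE t in halfline. \<bar>T (indicator {n}) t\<bar> \<le> \<bar>T (\<lambda>k. 1) t\<bar>" for n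
  proof -
    have "AE t in halfline. 0 \<le> T (indicator {n}) t"
      by (rule lattice_isometric_embedding_nonneg[OF T linf_indicator]) simp
    moreover have "AE t in halfline. T (indicator {n}) t \<le> T (\<lambda>k. 1) t"
      by (rule lattice_isometric_embedding_mono[OF T linf_indicator linf_const])
        (simp add: indicator_def)
    ultimately show ?thesis
      by eventually_elim simp
  qed
  then show "AE t in halfline. \<forall>n. \<bar>T (indicator {n}) t\<bar> \<le> \<bar>T (\<lambda>k. 1) t\<bar>"
    by (simp add: AE_all_countable)
  have "AE t in halfline. T (indicator {n}) t = 0 \<or> T (indicator {m}) t = 0" if "n \<noteq> m" for n m
    using that
    by (intro lattice_isometric_embedding_disjoint[OF T linf_indicator linf_indicator])
      (auto simp: indicator_def)
  then show "AE t in halfline. \<forall>n m. n \<noteq> m \<longrightarrow> T (indicator {n}) t = 0 \<or> T (indicator {m}) t = 0"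
    by (auto simp: AE_all_countable intro: eventually_mono)
qed

lemma lorentz_norm_block_index:
  assumes mass: "emeasure (phi_measure \<phi>) {0<..} = ennreal L" and "0 < L" and x: "x \<in> linf"
  shows "lorentz_norm \<phi> (\<lambda>t. x (block_index t) / L) = ennreal (linf_norm x)"
proof -
  note bdd = bdd_above_linf[OF x]
  have "rearr (\<lambda>t. x (block_index t) / L) t = ennreal (linf_norm x / L)" for t
  proof (rule rearr_block_index)
    show "\<bar>x n / L\<bar> \<le> linf_norm x / L" for n
      using cSUP_upper[OF _ bdd, of n] \<open>0 < L\<close> by (simp add: linf_norm_def abs_div divide_right_mono)
    show "\<exists>n. r < \<bar>x n / L\<bar>" if "r < linf_norm x / L" for r
    proof -
      have "r * L < linf_norm x"
        using that \<open>0 < L\<close> by (simp add: field_simps)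
      then obtain n where "r * L < \<bar>x n\<bar>"
        unfolding linf_norm_def using less_cSUP_iff[OF _ bdd] by auto
      then show ?thesis
        using \<open>0 < L\<close> by (auto simp: abs_div field_simps)
    qed
  qed
  then have "lorentz_norm \<phi> (\<lambda>t. x (block_index t) / L) = ennreal (linf_norm x / L) * ennreal L"
    by (simp add: lorentz_norm_const_rearr mass)
  also have "\<dots> = ennreal (linf_norm x)"
    using \<open>0 < L\<close> linf_norm_nonneg[OF x] by (simp flip: ennreal_mult)
  finally show ?thesis .
qed

lemma lattice_isometric_embedding_block_index:
  assumes mass: "emeasure (phi_measure \<phi>) {0<..} = ennreal L" and "0 < L"
  shows "lattice_isometric_embedding \<phi> (\<lambda>x t. x (block_index t) / L)"
  unfolding lattice_isometric_embedding_def
proof (intro conjI ballI allI)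
  fix x assume "x \<in> linf"
  then show "in_lorentz \<phi> (\<lambda>t. x (block_index t) / L)"
    using lorentz_norm_block_index[OF assms] by (simp add: in_lorentz_def)
next
  fix x y :: "nat \<Rightarrow> real" and a b :: real
  show "AE t in halfline. (\<lambda>n. a * x n + b * y n) (block_index t) / L
      = a * (x (block_index t) / L) + b * (y (block_index t) / L)"
    by (simp add: add_divide_distrib)
  show "AE t in halfline. (\<lambda>n. max (x n) (y n)) (block_index t) / L
      = max (x (block_index t) / L) (y (block_index t) / L)"
    using \<open>0 < L\<close> by (simp add: max_def divide_right_mono divide_le_cancel)
qed (rule lorentz_norm_block_index[OF assms])

section \<open>Concave weights\<close>

lemma emeasure_interval_measure_Ioi_LIMSEQ:
  assumes mono: "mono F" and right_cont: "\<And>a. continuous (at_right a) F"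
  shows "(\<lambda>n. ennreal (F (real n) - F a)) \<longlonglongrightarrow> emeasure (interval_measure F) {a<..}"
proof -
  have "(\<lambda>n. emeasure (interval_measure F) {a<..real n})
      \<longlonglongrightarrow> emeasure (interval_measure F) (\<Union>n. {a<..real n})"
    by (intro Lim_emeasure_incseq) (auto simp: incseq_def)
  moreover have "(\<Union>n. {a<..real n}) = {a<..}"
    by (auto intro: real_arch_simple)
  moreover have "emeasure (interval_measure F) {a<..real n} = ennreal (F (real n) - F a)" for n
    using monoD[OF mono, of "real n" a]
    by (subst emeasure_interval_measure_Ioc_eq) (auto intro: monoD[OF mono] right_cont ennreal_neg)
  ultimately show ?thesis by simp
qed

locale lorentz_weight =
  fixes \<phi> :: "real \<Rightarrow> real"
  assumes mono: "mono_on {0<..} \<phi>"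
    and concave: "concave_on {0<..} \<phi>"
    and pos: "\<forall>t>0. \<phi> t > 0"
    and lim0: "(\<phi> \<longlongrightarrow> 0) (at_right 0)"
begin

lemma mono_phi_ext: "mono (phi_ext \<phi>)"
  using pos by (auto simp: phi_ext_def monotone_on_def intro: mono_onD[OF mono] less_imp_le)

lemma continuous_at_right_phi_ext: "continuous (at_right a) (phi_ext \<phi>)"
proof (cases "a < 0")
  case True
  have "eventually (\<lambda>t. phi_ext \<phi> t = phi_ext \<phi> a) (at_right a)"
    using eventually_at_right[of a 0] True by (auto elim!: eventually_mono simp: phi_ext_def)
  then show ?thesis
    unfolding continuous_within by (rule tendsto_eventually)
next
  case False
  have "continuous_on {0<..} (\<lambda>t. - (- \<phi> t))"
    using concave unfolding concave_on_def by (intro continuous_on_minus convex_on_continuous) auto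
  then have "continuous_on {0<..} \<phi>"
    by simp
  then have "(\<phi> \<longlongrightarrow> phi_ext \<phi> a) (at_right a)"
    using False lim0
    by (cases "a = 0") (auto simp: phi_ext_def continuous_on_eq_continuous_at isCont_def filterlim_at_split)
  moreover have "eventually (\<lambda>t. \<phi> t = phi_ext \<phi> t) (at_right a)"
    using eventually_at_right_less[of a] False by (auto elim!: eventually_mono simp: phi_ext_def)
  ultimately show ?thesis
    unfolding continuous_within by (rule Lim_transform_eventually)
qed

lemma phi_ext_LIMSEQ_emeasure:
  "(\<lambda>n. ennreal (phi_ext \<phi> (real n))) \<longlonglongrightarrow> emeasure (phi_measure \<phi>) {0<..}"
  using emeasure_interval_measure_Ioi_LIMSEQ[OF mono_phi_ext continuous_at_right_phi_ext, of 0]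
  by (simp add: phi_ext_def)

lemma tendsto_phi_ext_iff: "(phi_ext \<phi> \<longlongrightarrow> L) at_top \<longleftrightarrow> (\<phi> \<longlongrightarrow> L) at_top"
  by (intro filterlim_cong) (auto simp: phi_ext_def eventually_at_top_linorder intro: exI[of _ 1])

lemma emeasure_phi_measure:
  assumes "(\<phi> \<longlongrightarrow> L) at_top"
  shows "emeasure (phi_measure \<phi>) {0<..} = ennreal L"
proof -
  have "(\<lambda>n. phi_ext \<phi> (real n)) \<longlonglongrightarrow> L"
    using assms filterlim_compose[OF _ filterlim_real_sequentially]
    unfolding tendsto_phi_ext_iff[symmetric] by blast
  then show ?thesis
    using phi_ext_LIMSEQ_emeasure by (metis LIMSEQ_unique tendsto_ennrealI)
qed

lemma tendsto_phi_if_emeasure_lt_top: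
  assumes "emeasure (phi_measure \<phi>) {0<..} < \<infinity>"
  shows "\<exists>L. (\<phi> \<longlongrightarrow> L) at_top"
proof -
  obtain M where M: "emeasure (phi_measure \<phi>) {0<..} = ennreal M" "0 \<le> M"
    using assms by (cases "emeasure (phi_measure \<phi>) {0<..}" rule: ennreal_cases) auto
  have nonneg: "0 \<le> phi_ext \<phi> t" for t
    using pos by (auto simp: phi_ext_def less_imp_le)
  have "(\<lambda>n. phi_ext \<phi> (real n)) \<longlonglongrightarrow> M"
    using phi_ext_LIMSEQ_emeasure nonneg M by simp
  then have "(phi_ext \<phi> \<longlongrightarrow> M) at_top"
    by (rule tendsto_at_topI_sequentially_real[OF mono_phi_ext])
  then show ?thesis
    unfolding tendsto_phi_ext_iff by blast
qed

lemma tendsto_phi_pos: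
  assumes "(\<phi> \<longlongrightarrow> L) at_top"
  shows "0 < L"
proof -
  have "\<phi> 1 \<le> L"
    using assms by (rule tendsto_lowerbound)
      (auto simp: eventually_at_top_linorder intro!: exI[of _ 1] mono_onD[OF mono])
  then show ?thesis
    using pos[rule_format, of 1] by linarith
qed

lemma tendsto_phi_if_lattice_isometric_embedding:
  assumes T: "lattice_isometric_embedding \<phi> T"
  shows "\<exists>L. (\<phi> \<longlongrightarrow> L) at_top"
proof (rule ccontr)
  assume "\<nexists>L. (\<phi> \<longlongrightarrow> L) at_top"
  then have "\<not> emeasure (phi_measure \<phi>) {0<..} < \<infinity>"
    using tendsto_phi_if_emeasure_lt_top by blast
  then have mass: "emeasure (phi_measure \<phi>) {0<..} = \<infinity>"
    by (simp add: not_less top_unique)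
  have "(\<lambda>n. lorentz_norm \<phi> (T (indicator {n}))) \<longlonglongrightarrow> 0"
    using lattice_isometric_embeddingD(1)[OF T] linf_const linf_indicator
    by (intro lorentz_norm_disjoint_tendsto_zero[OF mass, of "T (\<lambda>k. 1)"]
        lattice_isometric_embedding_unit_vectors[OF T])
      (auto simp: in_lorentz_def)
  moreover have "lorentz_norm \<phi> (T (indicator {n})) = 1" for n
    using lattice_isometric_embeddingD(4)[OF T linf_indicator] by (simp add: linf_norm_indicator)
  ultimately show False
    by (simp add: LIMSEQ_const_iff)
qed

end

theorem corollary3p11:
  fixes \<phi> :: "real \<Rightarrow> real"
  assumes mono: "mono_on {0<..} \<phi>"
    and concave: "concave_on {0<..} \<phi>"
    and pos: "\<forall>t>0. \<phi> t > 0"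
    and lim0: "(\<phi> \<longlongrightarrow> 0) (at_right 0)"
  shows "contains_lattice_isometric_linf \<phi> \<longleftrightarrow> (\<exists>L. (\<phi> \<longlongrightarrow> L) at_top)"
proof -
  interpret lorentz_weight \<phi>
    using assms by unfold_locales
  show ?thesis
    unfolding contains_lattice_isometric_linf_def
  proof
    show "\<exists>L. (\<phi> \<longlongrightarrow> L) at_top" if "\<exists>T. lattice_isometric_embedding \<phi> T"
      using that tendsto_phi_if_lattice_isometric_embedding by blast
  next
    assume "\<exists>L. (\<phi> \<longlongrightarrow> L) at_top"
    then obtain L where L: "(\<phi> \<longlongrightarrow> L) at_top" ..
    have "lattice_isometric_embedding \<phi> (\<lambda>x t. x (block_index t) / L)"
      by (rule lattice_isometric_embedding_block_index[OF emeasure_phi_measure[OF L] tendsto_phi_pos[OF L]])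
    then show "\<exists>T. lattice_isometric_embedding \<phi> T" by blast
  qed
qed

end
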